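(* For $k\in\{0,1,\dots,N\}$ let $$\Delta_{\mathrm{bin}}(k)=\inf_{\tau\ge 0}\Big[k\int_{-\infty}^{\tau}(u-\tau)^2\phi(u)\,du+(N-k)\int_{\tau}^{\infty}(u-\tau)^2\phi(u)\,du\Big],\qquad \phi(u)=(2\pi)^{-1/2}e^{-u^2/2}.$$ Then (i) $\Delta_{\mathrm{bin}}(k)<N/2$ for all $0\le k<N/2$, and (ii) $\Delta_{\mathrm{bin}}(k)=N/2$ for all $N/2\le k\le N$. *)

theory Defs
  imports "HOL-Probability.Probability"
begin

definition bin_objective :: "nat \<Rightarrow> nat \<Rightarrow> real \<Rightarrow> real" where
  "bin_objective N k \<tau> =
     real k * (LINT u:{..\<tau>}|lborel. (u - \<tau>)\<^sup>2 * std_normal_density u)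
   + (real N - real k) * (LINT u:{\<tau>..}|lborel. (u - \<tau>)\<^sup>2 * std_normal_density u)"

definition Delta_bin :: "nat \<Rightarrow> nat \<Rightarrow> real" where
  "Delta_bin N k = (INF \<tau>\<in>{0..}. bin_objective N k \<tau>)"

end

theory Submission imports Defs begin

text \<open>
  Write \<open>L(\<tau>)\<close> and \<open>U(\<tau>)\<close> for the two tail integrals in the objective.
  Since \<open>L(\<tau>) + U(\<tau>) = E(X - \<tau>)\<^sup>2 = 1 + \<tau>\<^sup>2\<close>, the objective equals
  \<open>(N - k)(1 + \<tau>\<^sup>2) + (2k - N) L(\<tau>)\<close> and also \<open>k(1 + \<tau>\<^sup>2) + (N - 2k) U(\<tau>)\<close>.
  At \<open>\<tau> = 0\<close> both tails are \<open>1/2\<close>, so the objective is \<open>N/2\<close>.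
  If \<open>2k \<ge> N\<close>, the first form together with the monotonicity of \<open>L\<close> shows that
  no \<open>\<tau> \<ge> 0\<close> does better. If \<open>2k < N\<close>, the bound
  \<open>U(\<tau>) \<le> E((X - \<tau>)\<^sup>2; X \<ge> 0) = (1 + \<tau>\<^sup>2)/2 - \<tau> \<surd>(2/\<pi>)\<close> makes the second form
  decrease to first order in \<tau>, so a small \<open>\<tau> > 0\<close> beats \<open>N/2\<close>.
\<close>

lemma set_integral_atMost_atLeast_split:
  fixes f :: "real \<Rightarrow> 'a::{banach, second_countable_topology}"
  assumes "integrable lborel f"
  shows "(LBINT x:{..t}. f x) + (LBINT x:{t..}. f x) = (\<integral>x. f x \<partial>lborel)"
proof -
  have int: "set_integrable lborel A f" if "A \<in> sets lborel" for A
    using assms that unfolding set_integrable_def by (rule integrable_mult_indicator[rotated])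
  have "(LBINT x:{..t} \<union> {t..}. f x) = (LBINT x:{..t}. f x) + (LBINT x:{t..}. f x)"
    using AE_lborel_singleton[of t] by (intro set_integral_Un_AE int) (auto elim!: eventually_mono)
  moreover have "{..t} \<union> {t..} = (UNIV :: real set)"
    by auto
  ultimately show ?thesis
    by (simp add: set_lebesgue_integral_def)
qed

lemma set_integral_atLeast_even:
  fixes f :: "real \<Rightarrow> real"
  assumes "integrable lborel f" and even: "\<And>x. f (- x) = f x"
  shows "(LBINT x:{0..}. f x) = (\<integral>x. f x \<partial>lborel) / 2"
proof -
  have "{x::real. - x \<in> {..0}} = {0..}"
    by auto
  then have "(LBINT x:{..0}. f x) = (LBINT x:{0..}. f x)"
    by (subst set_integral_reflect) (simp only: even)
  then show ?thesis
    using set_integral_atMost_atLeast_split[OF assms(1), of 0] by simp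
qed

lemma std_normal_density_minus [simp]: "std_normal_density (- x) = std_normal_density x"
  by (simp add: std_normal_density_def)

lemma set_integral_atLeast_std_normal_moments:
  shows "(LBINT x:{0..}. std_normal_density x) = 1 / 2"
    and "(LBINT x:{0..}. std_normal_density x * x) = sqrt (2 / pi) / 2"
    and "(LBINT x:{0..}. std_normal_density x * x\<^sup>2) = 1 / 2"
proof -
  show "(LBINT x:{0..}. std_normal_density x) = 1 / 2"
    by (subst set_integral_atLeast_even) simp_all
  have "(LBINT x:{0..}. std_normal_density x * x) = (LBINT x:{0..}. std_normal_density x * \<bar>x\<bar>)"
    unfolding set_lebesgue_integral_def
    by (rule Bochner_Integration.integral_cong) (auto split: split_indicator)
  also have "\<dots> = sqrt (2 / pi) / 2"
    using integrable_std_normal_moment_abs[of 1] integral_std_normal_moment_abs_odd[of 0]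
    by (subst set_integral_atLeast_even) simp_all
  finally show "(LBINT x:{0..}. std_normal_density x * x) = sqrt (2 / pi) / 2" .
  show "(LBINT x:{0..}. std_normal_density x * x\<^sup>2) = 1 / 2"
    using integrable_std_normal_moment[of 2] integral_std_normal_moment_even[of 1]
    by (subst set_integral_atLeast_even) simp_all
qed

lemma set_integral_std_normal_sq_dev:
  assumes "A \<in> sets lborel"
  shows "(LBINT u:A. (u - t)\<^sup>2 * std_normal_density u)
       = (LBINT u:A. std_normal_density u * u\<^sup>2) - 2 * t * (LBINT u:A. std_normal_density u * u)
         + t\<^sup>2 * (LBINT u:A. std_normal_density u)"
proof -
  have int: "set_integrable lborel A (\<lambda>u. std_normal_density u * u ^ n)" for n
    using integrable_std_normal_moment[of n] assms
    unfolding set_integrable_def by (rule integrable_mult_indicator[rotated])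
  have "(\<lambda>u. (u - t)\<^sup>2 * std_normal_density u)
      = (\<lambda>u. std_normal_density u * u\<^sup>2 - 2 * t * (std_normal_density u * u ^ 1)
             + t\<^sup>2 * (std_normal_density u * u ^ 0))"
    by (simp add: fun_eq_iff power2_eq_square algebra_simps)
  then show ?thesis
    using int[of 0] int[of 1] int[of 2] by simp
qed

lemma integrable_std_normal_sq_dev: "integrable lborel (\<lambda>u. (u - t)\<^sup>2 * std_normal_density u)"
proof -
  have "integrable lborel (\<lambda>u. std_normal_density u * u ^ 2 - 2 * t * (std_normal_density u * u ^ 1)
                                 + t\<^sup>2 * (std_normal_density u * u ^ 0))"
    by (intro Bochner_Integration.integrable_add Bochner_Integration.integrable_diff
        integrable_mult_right integrable_std_normal_moment)
  then show ?thesis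
    by (rule iffD1[OF Bochner_Integration.integrable_cong, rotated 2])
       (simp_all add: power2_eq_square algebra_simps)
qed

definition lower_partial_moment :: "real \<Rightarrow> real" where
  "lower_partial_moment t = (LBINT u:{..t}. (u - t)\<^sup>2 * std_normal_density u)"

definition upper_partial_moment :: "real \<Rightarrow> real" where
  "upper_partial_moment t = (LBINT u:{t..}. (u - t)\<^sup>2 * std_normal_density u)"

lemma bin_objective_eq_partial_moments:
  "bin_objective N k t = real k * lower_partial_moment t + (real N - real k) * upper_partial_moment t"
  unfolding bin_objective_def lower_partial_moment_def upper_partial_moment_def ..

lemma lower_plus_upper_partial_moment:
  "lower_partial_moment t + upper_partial_moment t = 1 + t\<^sup>2"
proof -
  have "(\<integral>u. (u - t)\<^sup>2 * std_normal_density u \<partial>lborel) = (LBINT u:UNIV. (u - t)\<^sup>2 * std_normal_density u)"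
    by (simp add: set_lebesgue_integral_def)
  also have "\<dots> = 1 + t\<^sup>2"
    using integral_std_normal_moment_even[of 1] integral_std_normal_moment_odd[of 0]
    by (subst set_integral_std_normal_sq_dev) (simp_all add: set_lebesgue_integral_def)
  finally show ?thesis
    unfolding lower_partial_moment_def upper_partial_moment_def
    using set_integral_atMost_atLeast_split[OF integrable_std_normal_sq_dev] by simp
qed

lemma partial_moments_nonneg:
  "0 \<le> lower_partial_moment t" "0 \<le> upper_partial_moment t"
  unfolding lower_partial_moment_def upper_partial_moment_def set_lebesgue_integral_def
  by (auto intro!: integral_nonneg_AE AE_I2)

lemma partial_moments_0:
  "lower_partial_moment 0 = 1 / 2" "upper_partial_moment 0 = 1 / 2"
proof -
  show "upper_partial_moment 0 = 1 / 2"
    using set_integral_atLeast_std_normal_moments(3)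
    unfolding upper_partial_moment_def by (simp add: mult.commute)
  then show "lower_partial_moment 0 = 1 / 2"
    using lower_plus_upper_partial_moment[of 0] by simp
qed

lemma lower_partial_moment_mono:
  assumes "s \<le> t"
  shows "lower_partial_moment s \<le> lower_partial_moment t"
proof -
  have int: "integrable lborel (\<lambda>x. indicat_real {..r} x *\<^sub>R ((x - r)\<^sup>2 * std_normal_density x))" for r
    using integrable_std_normal_sq_dev by (rule integrable_mult_indicator[rotated]) simp
  show ?thesis
    unfolding lower_partial_moment_def set_lebesgue_integral_def
  proof (rule integral_mono[OF int int])
    fix x :: real
    show "indicat_real {..s} x *\<^sub>R ((x - s)\<^sup>2 * std_normal_density x)
        \<le> indicat_real {..t} x *\<^sub>R ((x - t)\<^sup>2 * std_normal_density x)"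
    proof (cases "x \<le> s")
      case True
      then have "(x - s)\<^sup>2 \<le> (x - t)\<^sup>2"
        using assms by (intro power_mono_even) auto
      then show ?thesis
        using True assms by (auto intro: mult_right_mono)
    qed (auto split: split_indicator)
  qed
qed

lemma upper_partial_moment_le:
  assumes "0 \<le> t"
  shows "upper_partial_moment t \<le> (1 + t\<^sup>2) / 2 - t * sqrt (2 / pi)"
proof -
  have "upper_partial_moment t \<le> (LBINT u:{0..}. (u - t)\<^sup>2 * std_normal_density u)"
    unfolding upper_partial_moment_def set_lebesgue_integral_def
    using assms integrable_std_normal_sq_dev
    by (intro integral_mono integrable_mult_indicator) (auto split: split_indicator)
  also have "\<dots> = (1 + t\<^sup>2) / 2 - t * sqrt (2 / pi)"
    by (simp add: set_integral_std_normal_sq_dev set_integral_atLeast_std_normal_moments)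
  finally show ?thesis .
qed

lemma bin_objective_0: "bin_objective N k 0 = real N / 2"
  unfolding bin_objective_eq_partial_moments partial_moments_0 by (simp add: field_simps)

lemma bin_objective_nonneg:
  assumes "k \<le> N"
  shows "0 \<le> bin_objective N k t"
  unfolding bin_objective_eq_partial_moments
  using assms partial_moments_nonneg by (intro add_nonneg_nonneg mult_nonneg_nonneg) auto

lemma bin_objective_ge_half:
  assumes "real N / 2 \<le> real k" "k \<le> N" "0 \<le> t"
  shows "real N / 2 \<le> bin_objective N k t"
proof -
  have upper_eq: "upper_partial_moment t = 1 + t\<^sup>2 - lower_partial_moment t"
    using lower_plus_upper_partial_moment[of t] by simp
  have "bin_objective N k t
      = (real N - real k) * (1 + t\<^sup>2) + (2 * real k - real N) * lower_partial_moment t"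
    unfolding bin_objective_eq_partial_moments upper_eq by (simp add: algebra_simps)
  moreover have "(real N - real k) * 1 \<le> (real N - real k) * (1 + t\<^sup>2)"
    using assms(2) by (intro mult_left_mono) auto
  moreover have "(2 * real k - real N) * (1 / 2) \<le> (2 * real k - real N) * lower_partial_moment t"
    using lower_partial_moment_mono[OF assms(3)] partial_moments_0(1) assms(1)
    by (intro mult_left_mono) auto
  ultimately show ?thesis
    by (simp add: algebra_simps)
qed

lemma bin_objective_less_half:
  assumes "real k < real N / 2"
  obtains t where "0 \<le> t" "bin_objective N k t < real N / 2"
proof
  define c where "c = sqrt (2 / pi)"
  define m where "m = real N - 2 * real k"
  have "0 < c" "0 < m" "0 < real N"
    using assms unfolding c_def m_def by auto
  define t where "t = c * m / real N"
  show "0 \<le> t"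
    unfolding t_def using \<open>0 < c\<close> \<open>0 < m\<close> by simp
  have lower_eq: "lower_partial_moment t = 1 + t\<^sup>2 - upper_partial_moment t"
    using lower_plus_upper_partial_moment[of t] by simp
  have "bin_objective N k t = real k * (1 + t\<^sup>2) + m * upper_partial_moment t"
    unfolding bin_objective_eq_partial_moments m_def lower_eq by (simp add: algebra_simps)
  also have "\<dots> \<le> real k * (1 + t\<^sup>2) + m * ((1 + t\<^sup>2) / 2 - t * c)"
    using upper_partial_moment_le[OF \<open>0 \<le> t\<close>] \<open>0 < m\<close> unfolding c_def by simp
  also have "\<dots> = real N / 2 - (c * m)\<^sup>2 / (2 * real N)"
    unfolding t_def m_def using \<open>0 < real N\<close> by (simp add: field_simps power2_eq_square)
  also have "\<dots> < real N / 2"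
    using \<open>0 < c\<close> \<open>0 < m\<close> \<open>0 < real N\<close> by simp
  finally show "bin_objective N k t < real N / 2" .
qed

theorem proposition2p8:
  fixes N k :: nat
  assumes "k \<le> N"
  shows "(real k < real N / 2 \<longrightarrow> Delta_bin N k < real N / 2)
       \<and> (real N / 2 \<le> real k \<longrightarrow> Delta_bin N k = real N / 2)"
proof (intro conjI impI)
  have "bdd_below (bin_objective N k ` {0..})"
    using bin_objective_nonneg[OF assms] by (auto intro: bdd_belowI2[where m = 0])
  then have Delta_le: "Delta_bin N k \<le> bin_objective N k t" if "0 \<le> t" for t
    unfolding Delta_bin_def using that by (intro cINF_lower) auto
  show "Delta_bin N k < real N / 2" if small: "real k < real N / 2"
  proof -
    obtain t where "0 \<le> t" "bin_objective N k t < real N / 2"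
      using bin_objective_less_half[OF small] by blast
    with Delta_le show ?thesis
      by fastforce
  qed
  show "Delta_bin N k = real N / 2" if "real N / 2 \<le> real k"
  proof (rule antisym)
    show "Delta_bin N k \<le> real N / 2"
      using Delta_le[of 0] bin_objective_0 by simp
    show "real N / 2 \<le> Delta_bin N k"
      unfolding Delta_bin_def using bin_objective_ge_half[OF that assms]
      by (intro cINF_greatest) auto
  qed
qed

end
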